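(* Let $D$ be a regular semisimple matrix in $\mathrm{SL}_n(\mathbf k)$ with no eigenvalue equal to $1$, and let $P\subset\mathrm{SL}_n$ be the parabolic subgroup fixing a line $l\subset\mathbf k^n$, with unipotent radical $U_P$. If there exist matrices $M,N$ with $M$ unipotent, $N\in U_P(\mathbf k)$ and $NM=D$, then $l$ contains a cyclic vector for $D$. Moreover, for a given $l$, such a pair $(M,N)$, if it exists, is unique.
   Context: $\mathbf k$ is an algebraically closed field. A vector $v$ is cyclic for $D$ if $v,Dv,\dots,D^{n-1}v$ span $\mathbf k^n$. *)

theory Defs
  imports "HOL-Analysis.Analysis" "HOL-Computational_Algebra.Polynomial"
begin

definition alg_closed :: "'k::field itself \<Rightarrow> bool" where
  "alg_closed _ \<longleftrightarrow> (\<forall>p::'k poly. degree p \<ge> 1 \<longrightarrow> (\<exists>x. poly p x = 0))"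

(* Matrix power A^m (the HOL-Analysis vector type carries a componentwise
   multiplication, so we define the genuine matrix power explicitly). *)
definition matpow :: "'k::field^'n^'n \<Rightarrow> nat \<Rightarrow> 'k^'n^'n" where
  "matpow A m = ((\<lambda>X. X ** A) ^^ m) (mat 1)"

definition eigenvalue :: "'k::field^'n^'n \<Rightarrow> 'k \<Rightarrow> bool" where
  "eigenvalue A c \<longleftrightarrow> (\<exists>v. v \<noteq> 0 \<and> A *v v = c *s v)"

definition regular_semisimple :: "'k::field^'n^'n \<Rightarrow> bool" where
  "regular_semisimple A \<longleftrightarrow>
     (\<exists>Q Q' (d::'n \<Rightarrow> 'k). Q ** Q' = mat 1 \<and> Q' ** Q = mat 1
            \<and> Q' ** A ** Q = (\<chi> i j. if i = j then d i else 0) \<and> inj d)"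

definition unipotent :: "'k::field^'n^'n \<Rightarrow> bool" where
  "unipotent A \<longleftrightarrow> (\<exists>m. matpow (A - mat 1) m = 0)"

definition cyclic_vector :: "'k::field^'n^'n \<Rightarrow> 'k^'n \<Rightarrow> bool" where
  "cyclic_vector A v \<longleftrightarrow> vec.span {matpow A i *v v | i. i < CARD('n)} = UNIV"

definition parabolic_line :: "('k::field^'n) set \<Rightarrow> ('k^'n^'n) set" where
  "parabolic_line l = {g. det g = 1 \<and> (\<lambda>v. g *v v) ` l = l}"

(* Its unipotent radical: elements acting trivially on l and on k^n / l *)
definition unip_radical :: "('k::field^'n) set \<Rightarrow> ('k^'n^'n) set" where
  "unip_radical l = {g \<in> parabolic_line l.
      (\<forall>v. g *v v - v \<in> l) \<and> (\<forall>v\<in>l. g *v v = v)}"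

end

theory Submission imports Defs begin

(* Write l = span {w}. As N acts trivially on l and on k^n / l, every D x - M x = N (M x) - M x
   lies in l.

   Cyclicity: the D-cyclic subspace W generated by w contains l, and D - 1 is injective and maps W
   onto itself. If W were proper, nilpotency of M - 1 would give some u outside W with (M - 1) u in W;
   then (D - 1) u = (D - M) u + (M - 1) u lies in W, which forces u into W.

   Uniqueness: for two factorizations, M' - M = w e^T has rank one. Let d(t) and a(t) be the
   generating polynomials of e ((M - 1)^j w) and e ((M' - 1)^j w). Expanding (M' - 1)^r w gives
   a = d + t a d, and comparing degrees forces d = 0. So M' - M vanishes on the (M - 1)-cyclic
   subspace generated by w, which contains the D-cyclic one, i.e. everything; finally N = D M^-1. *)

lemma matpow_0 [simp]: "matpow A 0 = mat 1"
  by (simp add: matpow_def)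

lemma matpow_Suc: "matpow A (Suc m) = matpow A m ** A"
  by (simp add: matpow_def)

lemma matpow_commute: "matpow A m ** A = A ** matpow A m"
  by (induction m) (simp_all add: matpow_Suc flip: matrix_mul_assoc)

lemma matpow_Suc_mult_vec: "matpow A (Suc m) *v x = A *v (matpow A m *v x)"
  by (simp add: matpow_Suc matpow_commute matrix_vector_mul_assoc)

lemma matpow_Suc_mult_vec': "matpow A (Suc m) *v x = matpow A m *v (A *v x)"
  by (simp add: matpow_Suc matrix_vector_mul_assoc)

lemma matpow_eq_0_mono:
  assumes "matpow A m = 0" "m \<le> r" shows "matpow A r = 0"
  using assms(2) by (induction r rule: dec_induct) (simp_all add: assms(1) matpow_Suc)

lemma mult_vec_span_invariant:
  assumes "\<And>x. x \<in> B \<Longrightarrow> A *v x \<in> vec.span B" and "x \<in> vec.span B"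
  shows "A *v x \<in> vec.span B"
proof -
  have "A *v x \<in> vec.span ((*v) A ` B)"
    using assms(2) by (simp add: vec.span_image)
  also have "\<dots> \<subseteq> vec.span B"
    using assms(1) by (intro vec.span_minimal) auto
  finally show ?thesis .
qed

definition krylov_space :: "'k::field^'n^'n \<Rightarrow> 'k^'n \<Rightarrow> ('k^'n) set" where
  "krylov_space A w = vec.span (range (\<lambda>i. matpow A i *v w))"

lemma subspace_krylov_space: "vec.subspace (krylov_space A w)"
  by (simp add: krylov_space_def)

lemma mem_krylov_space: "w \<in> krylov_space A w"
  unfolding krylov_space_def by (rule vec.span_base) (auto intro: range_eqI[of _ _ 0])

lemma krylov_space_invariant: "x \<in> krylov_space A w \<Longrightarrow> A *v x \<in> krylov_space A w"
  unfolding krylov_space_def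
  by (rule mult_vec_span_invariant) (auto intro: vec.span_base simp flip: matpow_Suc_mult_vec)

lemma krylov_space_minimal:
  assumes "vec.subspace S" "w \<in> S" "\<And>x. x \<in> S \<Longrightarrow> A *v x \<in> S"
  shows "krylov_space A w \<subseteq> S"
proof -
  have "matpow A i *v w \<in> S" for i
    by (induction i) (simp_all add: assms matpow_Suc_mult_vec)
  then show ?thesis
    unfolding krylov_space_def using assms(1) by (intro vec.span_minimal) auto
qed

lemma krylov_space_eq_span_initial:
  fixes A :: "'k::field^'n^'n"
  shows "krylov_space A w = vec.span ((\<lambda>i. matpow A i *v w) ` {..<CARD('n)})"
proof -
  define f where "f i = matpow A i *v w" for i
  have "\<exists>k\<le>CARD('n). f k \<in> vec.span (f ` {..<k})"
  proof (rule ccontr)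
    assume "\<not> ?thesis"
    then have "vec.dim (f ` {..<k}) = k" if "k \<le> Suc CARD('n)" for k
      using that by (induction k) (auto simp: lessThan_Suc vec.dim_insert)
    with dim_subset_UNIV_cart_gen[of "f ` {..<Suc CARD('n)}"] show False
      by simp
  qed
  then obtain k where k: "k \<le> CARD('n)" "f k \<in> vec.span (f ` {..<k})"
    by blast
  have "A *v x \<in> vec.span (f ` {..<k})" if "x \<in> vec.span (f ` {..<k})" for x
  proof (rule mult_vec_span_invariant[OF _ that])
    fix y assume "y \<in> f ` {..<k}"
    then obtain i where "i < k" "A *v y = f (Suc i)"
      by (auto simp: f_def matpow_Suc_mult_vec)
    with k(2) show "A *v y \<in> vec.span (f ` {..<k})"
      by (cases "Suc i = k") (auto intro: vec.span_base)
  qed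
  moreover have "w \<in> vec.span (f ` {..<k})"
  proof (cases "k = 0")
    case True
    with k(2) show ?thesis by (simp add: f_def)
  next
    case False
    then have "f 0 \<in> vec.span (f ` {..<k})" by (intro vec.span_base) simp
    then show ?thesis by (simp add: f_def)
  qed
  ultimately have "krylov_space A w \<subseteq> vec.span (f ` {..<k})"
    by (intro krylov_space_minimal vec.subspace_span)
  also have "\<dots> \<subseteq> vec.span (f ` {..<CARD('n)})"
    using k(1) by (intro vec.span_mono) auto
  moreover have "vec.span (f ` {..<CARD('n)}) \<subseteq> krylov_space A w"
    unfolding krylov_space_def f_def by (intro vec.span_mono) auto
  ultimately show ?thesis
    unfolding f_def by blast
qed

lemma cyclic_vector_iff_krylov_space:
  fixes A :: "'k::field^'n^'n"
  shows "cyclic_vector A v \<longleftrightarrow> krylov_space A v = UNIV"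
proof -
  have "{matpow A i *v v | i. i < CARD('n)} = (\<lambda>i. matpow A i *v v) ` {..<CARD('n)}"
    by auto
  then show ?thesis
    by (simp add: cyclic_vector_def krylov_space_eq_span_initial)
qed

lemma not_eigenvalue_1_iff_inj: "\<not> eigenvalue A 1 \<longleftrightarrow> inj ((*v) (A - mat 1))"
proof -
  have "(A - mat 1) *v x = 0 \<longleftrightarrow> A *v x = 1 *s x" for x
    by (simp add: matrix_vector_mult_diff_rdistrib)
  then show ?thesis
    unfolding eigenvalue_def vec.inj_iff_eq_0 by blast
qed

lemma exists_not_mem_mult_vec_mem:
  assumes "matpow A m *v v \<in> W" "v \<notin> W"
  shows "\<exists>u. u \<notin> W \<and> A *v u \<in> W"
  using assms
proof (induction m arbitrary: v)
  case 0
  then show ?case by simp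
next
  case (Suc m)
  show ?case
  proof (cases "A *v v \<in> W")
    case False
    with Suc.prems(1) show ?thesis by (intro Suc.IH) (simp_all add: matpow_Suc_mult_vec')
  next
    case True
    with Suc.prems(2) show ?thesis by blast
  qed
qed

lemma mem_subspace_if_injective_image_mem:
  fixes B :: "'k::field^'n^'n"
  assumes "inj ((*v) B)" "vec.subspace W" "\<And>x. x \<in> W \<Longrightarrow> B *v x \<in> W" "B *v y \<in> W"
  shows "y \<in> W"
proof -
  have "vec.dim ((*v) B ` W) = vec.dim W"
    using assms(1) by (intro vec.dim_image_eq matrix_vector_mul_linear_gen) (auto intro: inj_on_subset)
  then have "(*v) B ` W = W"
    using assms(2,3) by (intro vec.subspace_dim_equal vec.subspace_image) auto
  with assms(4) obtain x where "x \<in> W" "B *v y = B *v x"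
    by (metis imageE)
  with assms(1) show ?thesis
    by (metis injD)
qed

lemma invariant_subspace_eq_UNIV:
  fixes D M :: "'k::field^'n^'n"
  assumes W: "vec.subspace W" "\<And>x. x \<in> W \<Longrightarrow> D *v x \<in> W"
    and diff: "\<And>x. D *v x - M *v x \<in> W"
    and inj: "inj ((*v) (D - mat 1))" and nilpotent: "matpow (M - mat 1) m = 0"
  shows "W = UNIV"
proof (rule ccontr)
  assume "W \<noteq> UNIV"
  then obtain v where "v \<notin> W" by blast
  moreover have "matpow (M - mat 1) m *v v \<in> W"
    using vec.subspace_0[OF W(1)] by (simp add: nilpotent)
  ultimately obtain u where u: "u \<notin> W" "(M - mat 1) *v u \<in> W"
    using exists_not_mem_mult_vec_mem[of "M - mat 1" m v W] by blast
  have "(D - mat 1) *v u = (D *v u - M *v u) + (M - mat 1) *v u"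
    by (simp add: matrix_vector_mult_diff_rdistrib)
  also have "\<dots> \<in> W"
    by (rule vec.subspace_add[OF W(1) diff u(2)])
  finally have "(D - mat 1) *v u \<in> W" .
  moreover have "(D - mat 1) *v x \<in> W" if "x \<in> W" for x
  proof -
    have "(D - mat 1) *v x = D *v x - x"
      by (simp add: matrix_vector_mult_diff_rdistrib)
    also have "\<dots> \<in> W"
      by (rule vec.subspace_diff[OF W(1) W(2)[OF that] that])
    finally show ?thesis .
  qed
  ultimately have "u \<in> W"
    by (rule mem_subspace_if_injective_image_mem[OF inj W(1), rotated])
  with u(1) show False by contradiction
qed

lemma poly_eq_0_if_eq_add_pCons_mult:
  fixes p q :: "'a::idom poly"
  assumes "p = q + pCons 0 (p * q)"
  shows "q = 0"
proof (rule ccontr)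
  assume "q \<noteq> 0"
  with assms have "p \<noteq> 0" by auto
  have "Suc (degree p + degree q) = degree (pCons 0 (p * q))"
    using \<open>p \<noteq> 0\<close> \<open>q \<noteq> 0\<close> by (simp add: degree_mult_eq)
  also have "\<dots> = degree (p - q)"
    using assms by (metis add_diff_cancel_left')
  also have "\<dots> \<le> max (degree p) (degree q)"
    by (rule degree_diff_le_max)
  finally show False by simp
qed

lemma convolution_recurrence_eq_0:
  fixes a d :: "nat \<Rightarrow> 'a::idom"
  assumes rec: "\<And>r. a r = d r + (\<Sum>s<r. a s * d (r - 1 - s))"
    and "\<And>r. N \<le> r \<Longrightarrow> a r = 0" "\<And>r. N \<le> r \<Longrightarrow> d r = 0"
  shows "d r = 0"
proof -
  define p q where "p = Poly (map a [0..<N])" and "q = Poly (map d [0..<N])"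
  have coeffs: "coeff p = a" "coeff q = d"
    using assms(2,3) by (auto simp: p_def q_def nth_default_def)
  have "p = q + pCons 0 (p * q)"
  proof (rule poly_eqI)
    fix r
    show "coeff p r = coeff (q + pCons 0 (p * q)) r"
    proof (cases r)
      case (Suc r')
      have "(\<Sum>s<r. a s * d (r - 1 - s)) = (\<Sum>s\<le>r'. a s * d (r' - s))"
        by (simp add: Suc lessThan_Suc_atMost)
      then show ?thesis
        using rec[of r] by (simp add: coeffs coeff_mult Suc)
    qed (use rec[of 0] in \<open>simp add: coeffs\<close>)
  qed
  then have "q = 0" by (rule poly_eq_0_if_eq_add_pCons_mult)
  then show ?thesis by (simp flip: coeffs(2))
qed

lemma nilpotent_rank_one_perturbation:
  fixes A E :: "'k::field^'n^'n"
  assumes A: "matpow A m = 0" and AE: "matpow (A + E) m = 0"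
    and E: "\<And>x. E *v x = e x *s w" and "w \<noteq> 0"
  shows "e (matpow A j *v w) = 0"
proof -
  have e_add: "e (x + y) = e x + e y" for x y
  proof -
    have "e (x + y) *s w = (e x + e y) *s w"
      by (simp flip: E add: vec.add vec.scale_left_distrib)
    with \<open>w \<noteq> 0\<close> show ?thesis by (metis vec.scale_cancel_right)
  qed
  have e_sum: "e (\<Sum>s\<in>S. g s) = (\<Sum>s\<in>S. e (g s))" for g and S :: "nat set"
  proof -
    have "e (\<Sum>s\<in>S. g s) *s w = (\<Sum>s\<in>S. e (g s)) *s w"
      by (simp flip: E add: vec.sum vec.scale_sum_left)
    with \<open>w \<noteq> 0\<close> show ?thesis by simp
  qed
  have e_scale: "e (c *s x) = c * e x" for c x
  proof -
    have "e (c *s x) *s w = (c * e x) *s w"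
      by (metis E vec.scale vector_smult_assoc)
    with \<open>w \<noteq> 0\<close> show ?thesis by simp
  qed
  have e_0: "e 0 = 0"
    using e_scale[of 0 0] by simp
  define f f' where "f r = matpow A r *v w" and "f' r = matpow (A + E) r *v w" for r
  define a d where "a r = e (f' r)" and "d r = e (f r)" for r
  have f'_eq: "f' r = f r + (\<Sum>s<r. a s *s f (r - 1 - s))" for r
  proof (induction r)
    case 0
    then show ?case by (simp add: f_def f'_def)
  next
    case (Suc r)
    have "f' (Suc r) = A *v f' r + a r *s w"
      by (simp add: f'_def a_def matpow_Suc_mult_vec matrix_vector_mult_add_rdistrib E)
    also have "A *v f' r = f (Suc r) + (\<Sum>s<r. a s *s f (r - s))"
      by (simp add: Suc.IH vec.add vec.sum vec.scale f_def Suc_diff_Suc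
          flip: matpow_Suc_mult_vec)
    finally show ?case
      by (simp add: f_def add.assoc)
  qed
  have "a r = d r + (\<Sum>s<r. a s * d (r - 1 - s))" for r
    unfolding a_def[of r] f'_eq by (simp add: e_add e_sum e_scale d_def)
  moreover have "a r = 0" "d r = 0" if "m \<le> r" for r
    using matpow_eq_0_mono[OF A that] matpow_eq_0_mono[OF AE that]
    by (simp_all add: a_def d_def f_def f'_def e_0)
  ultimately have "d j = 0"
    by (rule convolution_recurrence_eq_0)
  then show ?thesis by (simp add: d_def f_def)
qed

lemma krylov_space_subset_if_diff_mem_span:
  fixes D M :: "'k::field^'n^'n"
  assumes "\<And>x. D *v x - M *v x \<in> vec.span {w}"
  shows "krylov_space D w \<subseteq> krylov_space (M - mat 1) w"
proof (rule krylov_space_minimal[OF subspace_krylov_space mem_krylov_space])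
  let ?K = "krylov_space (M - mat 1) w"
  fix x assume x: "x \<in> ?K"
  have "vec.span {w} \<subseteq> ?K"
    by (intro vec.span_minimal subspace_krylov_space) (simp add: mem_krylov_space)
  then have "D *v x - M *v x \<in> ?K"
    using assms by blast
  moreover have "(M - mat 1) *v x + x \<in> ?K"
    by (rule vec.subspace_add[OF subspace_krylov_space krylov_space_invariant[OF x] x])
  moreover have "D *v x = ((M - mat 1) *v x + x) + (D *v x - M *v x)"
    by (simp add: matrix_vector_mult_diff_rdistrib)
  ultimately show "D *v x \<in> ?K"
    by (metis vec.subspace_add[OF subspace_krylov_space])
qed

lemma unipotent_eq_if_diff_mem_span:
  fixes D M M' :: "'k::field^'n^'n"
  assumes w: "w \<noteq> 0" "krylov_space D w = UNIV"
    and unipotent: "unipotent M" "unipotent M'"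
    and diff: "\<And>x. D *v x - M *v x \<in> vec.span {w}" "\<And>x. D *v x - M' *v x \<in> vec.span {w}"
  shows "M = M'"
proof -
  define A E where "A = M - mat 1" and "E = M' - M"
  obtain m1 m2 where "matpow A m1 = 0" "matpow (A + E) m2 = 0"
    using unipotent by (auto simp: unipotent_def A_def E_def)
  then have nilpotent: "matpow A (m1 + m2) = 0" "matpow (A + E) (m1 + m2) = 0"
    by (simp_all add: matpow_eq_0_mono)
  have "\<exists>c. E *v x = c *s w" for x
  proof -
    have "E *v x = (D *v x - M *v x) - (D *v x - M' *v x)"
      by (simp add: E_def matrix_vector_mult_diff_rdistrib)
    also have "\<dots> \<in> vec.span {w}"
      by (rule vec.span_diff[OF diff])
    finally show ?thesis
      by (auto simp: vec.span_singleton)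
  qed
  then obtain e where e: "\<And>x. E *v x = e x *s w"
    by metis
  have "matpow A j *v w \<in> {x. E *v x = 0}" for j
    using nilpotent_rank_one_perturbation[OF nilpotent e w(1)] by (simp add: e)
  then have "krylov_space A w \<subseteq> {x. E *v x = 0}"
    unfolding krylov_space_def by (intro vec.span_minimal vec.subspace_kernel) auto
  with w(2) krylov_space_subset_if_diff_mem_span[OF diff(1)] have "E *v x = 0" for x
    by (auto simp: A_def)
  then show ?thesis
    by (simp add: E_def matrix_eq matrix_vector_mult_diff_rdistrib)
qed

lemma invertible_if_unipotent:
  fixes M :: "'k::field^'n^'n"
  assumes "unipotent M"
  shows "invertible M"
proof -
  obtain m where m: "matpow (M - mat 1) m = 0"
    using assms unfolding unipotent_def by blast
  have "x = 0" if "M *v x = 0" for x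
  proof -
    have "(M - mat 1) *v x = - x"
      using that by (simp add: matrix_vector_mult_diff_rdistrib)
    then have "matpow (M - mat 1) j *v x = (- 1) ^ j *s x" for j
      by (induction j) (simp_all add: matpow_Suc_mult_vec vec.scale)
    from this[of m] show "x = 0"
      by (simp add: m)
  qed
  then show ?thesis
    by (simp add: invertible_left_inverse matrix_left_invertible_injective vec.inj_iff_eq_0)
qed

lemma unip_radical_mult_diff_mem: "N \<in> unip_radical l \<Longrightarrow> (N ** M) *v x - M *v x \<in> l"
  by (simp add: unip_radical_def flip: matrix_vector_mul_assoc)

lemma dim_1_span_singletonE:
  fixes l :: "('k::field^'n) set"
  assumes "vec.subspace l" "vec.dim l = 1"
  obtains w where "w \<noteq> 0" "l = vec.span {w}"
proof -
  obtain B where B: "B \<subseteq> l" "vec.independent B" "l \<subseteq> vec.span B" "card B = 1"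
    using vec.basis_exists[of l] assms(2) by metis
  then obtain w where "B = {w}"
    by (metis card_1_singletonE)
  with B assms(1) show ?thesis
    by (metis that vec.dependent_single vec.span_subspace)
qed

lemma krylov_space_eq_UNIV_if_unipotent_factor:
  fixes D M N :: "'k::field^'n^'n"
  assumes "\<not> eigenvalue D 1" "unipotent M" "N \<in> unip_radical (vec.span {w})" "N ** M = D"
  shows "krylov_space D w = UNIV"
proof -
  obtain m where "matpow (M - mat 1) m = 0"
    using assms(2) unfolding unipotent_def by blast
  moreover have "vec.span {w} \<subseteq> krylov_space D w"
    by (intro vec.span_minimal subspace_krylov_space) (simp add: mem_krylov_space)
  ultimately show ?thesis
    using unip_radical_mult_diff_mem[OF assms(3)] assms(1,4)
    by (intro invariant_subspace_eq_UNIV[OF subspace_krylov_space krylov_space_invariant])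
      (auto simp: not_eigenvalue_1_iff_inj)
qed

lemma unipotent_factor_unique:
  fixes D M N M' N' :: "'k::field^'n^'n"
  assumes "w \<noteq> 0" "\<not> eigenvalue D 1"
    and M: "unipotent M" "N \<in> unip_radical (vec.span {w})" "N ** M = D"
    and M': "unipotent M'" "N' \<in> unip_radical (vec.span {w})" "N' ** M' = D"
  shows "M = M' \<and> N = N'"
proof
  have "D *v x - M *v x \<in> vec.span {w}" "D *v x - M' *v x \<in> vec.span {w}" for x
    using unip_radical_mult_diff_mem[OF M(2), of M x] unip_radical_mult_diff_mem[OF M'(2), of M' x]
    by (simp_all add: M(3) M'(3))
  with assms(1) krylov_space_eq_UNIV_if_unipotent_factor[OF assms(2) M] M(1) M'(1)
  show "M = M'"
    by (rule unipotent_eq_if_diff_mem_span)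
  moreover obtain C where "M ** C = mat 1"
    using invertible_if_unipotent[OF M(1)] by (auto simp: invertible_def)
  ultimately show "N = N'"
    using M(3) M'(3) by (metis matrix_mul_assoc matrix_mul_rid)
qed

theorem mainTheorem12:
  fixes D :: "'k::field^'n^'n" and l :: "('k^'n) set"
  assumes "alg_closed TYPE('k)"
    and "det D = 1"
    and "regular_semisimple D"
    and "\<not> eigenvalue D 1"
    and "vec.subspace l" and "vec.dim l = 1"
  shows "((\<exists>M N. unipotent M \<and> N \<in> unip_radical l \<and> N ** M = D)
            \<longrightarrow> (\<exists>v\<in>l. cyclic_vector D v))
       \<and> (\<forall>M N M' N'. unipotent M \<and> N \<in> unip_radical l \<and> N ** M = D
            \<and> unipotent M' \<and> N' \<in> unip_radical l \<and> N' ** M' = D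
            \<longrightarrow> M = M' \<and> N = N')"
proof -
  obtain w where w: "w \<noteq> 0" "l = vec.span {w}"
    using dim_1_span_singletonE assms(5,6) by blast
  have "cyclic_vector D w" if "unipotent M" "N \<in> unip_radical l" "N ** M = D" for M N
    using krylov_space_eq_UNIV_if_unipotent_factor[OF assms(4) that[unfolded w(2)]]
    by (simp add: cyclic_vector_iff_krylov_space)
  moreover have "w \<in> l"
    by (simp add: w(2) vec.span_base)
  moreover note unipotent_factor_unique[OF w(1) assms(4), folded w(2)]
  ultimately show ?thesis
    by blast
qed

end
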